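(* Assume the setting and Assumptions A1 and A2 described in the context. Then for every $\beta\in[0,1/2)$, \[ \sum_{k\ge1}k^{-1/2}D_\beta(\theta_k,\theta_{k-1})V^\beta(X_k)<\infty\qquad\mathbb P\text{-a.s.} \]
   Context: Setting: $(\mathsf X,\mathcal X)$ is a measurable space with countably generated $\sigma$-field, $(\Theta,\mathcal T)$ a measurable space, $\pi$ a probability measure on $(\mathsf X,\mathcal X)$, and $\{P_\theta,\theta\in\Theta\}$ a family of Markov transition kernels on $\mathsf X$ such that $\theta\mapsto P_\theta(x,A)$ is measurable for every $(x,A)$ and each $P_\theta$ admits $\pi$ as invariant distribution. Let $\bar\mu$ be a probability measure on $\mathsf X\times\Theta$ and $\{(X_n,\theta_n),n\ge0\}$ a process with law $\mathbb P$ (expectation $\mathbb E$) and natural filtration $\mathcal F_n$, such that $(X_0,\theta_0)\sim\bar\mu$ and for every $n\ge0$ and nonnegative measurable $f$, $\mathbb E(f(X_{n+1})\mid\mathcal F_n)=P_{\theta_n}f(X_n)$ a.s. Notation: $Qf(x)=\int Q(x,dy)f(y)$; for $W:\mathsf X\to[1,\infty)$, $|f|_W=\sup_{\mathsf X}|f|/W$, and $\|\mu\|_W=\sup_{|g|_W\le1}|\mu(g)|$. For $\beta\in[0,1]$, $D_\beta(\theta,\theta')=\sup_{|f|_{V^\beta}\le1}\sup_{x}|P_\theta f(x)-P_{\theta'}f(x)|/V^\beta(x)$. Assumption A1: each $P_\theta$ is phi-irreducible and aperiodic with invariant distribution $\pi$; there is a measurable $V:\mathsf X\to[1,\infty)$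 with $\int V(x)\bar\mu(dx,d\theta)<\infty$ such that for every $\beta\in(0,1]$ there exist $\rho\in(0,1)$, $C<\infty$ with $\|P_\theta^n(x,\cdot)-\pi\|_{V^\beta}\le C\rho^nV^\beta(x)$ for all $(x,\theta)$, $n\ge0$; and there exist $b<\infty$, $\lambda\in(0,1)$ with $P_\theta V(x)\le\lambda V(x)+b$ for all $(x,\theta)$. Assumption A2: there exist $\eta\in[0,1/2)$ and a nonincreasing sequence of positive numbers $\{\gamma_n,n\ge1\}$ with $\gamma_n=O(n^{-\alpha})$ for some $\alpha>1/2$, such that for every $\beta\in[0,1]$ there is a finite constant $C$ with $D_\beta(\theta_{n-1},\theta_n)\le C\gamma_nV^\eta(X_n)$ $\mathbb P$-a.s. for all $n\ge1$. *)

theory Defs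
  imports "HOL-Probability.Probability" "HOL-Library.Landau_Symbols"
begin

definition countably_generated :: "'a measure \<Rightarrow> bool" where
  "countably_generated M \<longleftrightarrow>
     (\<exists>G. countable G \<and> G \<subseteq> Pow (space M) \<and> sets M = sigma_sets (space M) G)"

definition markov_kernel :: "'a measure \<Rightarrow> ('a \<Rightarrow> 'a measure) \<Rightarrow> bool" where
  "markov_kernel M K \<longleftrightarrow> K \<in> M \<rightarrow>\<^sub>M prob_algebra M"

fun kpow :: "'a measure \<Rightarrow> ('a \<Rightarrow> 'a measure) \<Rightarrow> nat \<Rightarrow> 'a \<Rightarrow> 'a measure" where
  "kpow M K 0 x = return M x"
| "kpow M K (Suc n) x = kpow M K n x \<bind> K"

definition phi_irreducible :: "'a measure \<Rightarrow> ('a \<Rightarrow> 'a measure) \<Rightarrow> bool" where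
  "phi_irreducible M K \<longleftrightarrow>
     (\<exists>\<phi>. sets \<phi> = sets M \<and> sigma_finite_measure \<phi> \<and> emeasure \<phi> (space M) > 0 \<and>
        (\<forall>A\<in>sets M. emeasure \<phi> A > 0 \<longrightarrow>
           (\<forall>x\<in>space M. \<exists>n\<ge>1. emeasure (kpow M K n x) A > 0)))"

text \<open>Aperiodicity: there is no d-cycle with d >= 2, i.e. no family of d disjoint nonempty
  measurable sets D_0,...,D_{d-1} with K(x, D_{(i+1) mod d}) = 1 for all x in D_i.
  (For a phi-irreducible chain the union of such a cycle is absorbing, hence its complement
  is null for the maximal irreducibility measure; so this is the usual notion of period 1.)\<close>
definition aperiodic :: "'a measure \<Rightarrow> ('a \<Rightarrow> 'a measure) \<Rightarrow> bool" where
  "aperiodic M K \<longleftrightarrow>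
     \<not> (\<exists>d::nat. \<exists>D::nat \<Rightarrow> 'a set. d \<ge> 2 \<and>
          (\<forall>i<d. D i \<in> sets M \<and> D i \<noteq> {}) \<and>
          (\<forall>i<d. \<forall>j<d. i \<noteq> j \<longrightarrow> D i \<inter> D j = {}) \<and>
          (\<forall>i<d. \<forall>x\<in>D i. emeasure (K x) (D ((i + 1) mod d)) = 1))"

definition wnorm_diff :: "'a measure \<Rightarrow> ('a \<Rightarrow> real) \<Rightarrow> 'a measure \<Rightarrow> 'a measure \<Rightarrow> ennreal" where
  "wnorm_diff M W \<mu> \<nu> =
     (SUP g\<in>{g \<in> borel_measurable M. \<forall>x\<in>space M. \<bar>g x\<bar> \<le> W x}.
        ennreal \<bar>(\<integral>y. g y \<partial>\<mu>) - (\<integral>y. g y \<partial>\<nu>)\<bar>)"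

definition Dbeta :: "'x measure \<Rightarrow> ('t \<Rightarrow> 'x \<Rightarrow> 'x measure) \<Rightarrow> ('x \<Rightarrow> real) \<Rightarrow> real
                     \<Rightarrow> 't \<Rightarrow> 't \<Rightarrow> ennreal" where
  "Dbeta M P V \<beta> \<theta> \<theta>' =
     (SUP f\<in>{f \<in> borel_measurable M. \<forall>x\<in>space M. \<bar>f x\<bar> \<le> V x powr \<beta>}.
        SUP x\<in>space M.
          ennreal (\<bar>(\<integral>y. f y \<partial>P \<theta> x) - (\<integral>y. f y \<partial>P \<theta>' x)\<bar> / V x powr \<beta>))"

definition natural_filtration ::
  "'w measure \<Rightarrow> 'x measure \<Rightarrow> 't measure \<Rightarrow> (nat \<Rightarrow> 'w \<Rightarrow> 'x) \<Rightarrow> (nat \<Rightarrow> 'w \<Rightarrow> 't)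
     \<Rightarrow> nat \<Rightarrow> 'w measure" where
  "natural_filtration \<Omega> M T X \<theta> n =
     sigma (space \<Omega>)
       (\<Union>k\<in>{..n}. {(\<lambda>\<omega>. (X k \<omega>, \<theta> k \<omega>)) -` A \<inter> space \<Omega> | A. A \<in> sets (M \<Otimes>\<^sub>M T)})"

end

theory Submission
  imports Defs
begin

text \<open>The drift condition gives \<open>E V(X\<^sub>n\<^sub>+\<^sub>1) \<le> \<lambda> E V(X\<^sub>n) + b\<close>, so \<open>E V(X\<^sub>n)\<close> stays bounded.
  By A2 and \<open>\<eta> + \<beta> < 1\<close>, the \<open>k\<close>-th term of the series is at most \<open>C k\<^sup>-\<^sup>1\<^sup>/\<^sup>2 \<gamma>\<^sub>k V(X\<^sub>k)\<close>, and
  \<open>\<Sum> k\<^sup>-\<^sup>1\<^sup>/\<^sup>2 \<gamma>\<^sub>k < \<infinity>\<close> since \<open>\<gamma>\<^sub>k = O(k\<^sup>-\<^sup>\<alpha>)\<close> with \<open>\<alpha> > 1/2\<close>. Hence the dominating series has finite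
  expectation and is finite almost surely. Of A1 only the drift inequality is needed.\<close>

lemma summable_powr_mult_bigo:
  fixes \<gamma> :: "nat \<Rightarrow> real"
  assumes \<gamma>: "\<gamma> \<in> O(\<lambda>n. real n powr (-\<alpha>))" and exponent: "s + \<alpha> > 1"
  shows "summable (\<lambda>k. real (Suc k) powr (-s) * \<bar>\<gamma> (Suc k)\<bar>)"
proof -
  obtain c where ev: "eventually (\<lambda>n. norm (\<gamma> n) \<le> c * norm (real n powr (-\<alpha>))) at_top"
    using \<gamma> by (elim landau_o.bigE) auto
  have "summable (\<lambda>k. c * real (Suc k) powr (-(s + \<alpha>)))"
    using exponent by (subst summable_Suc_iff, intro summable_mult) (simp add: summable_real_powr_iff)
  moreover have "eventually (\<lambda>k. norm (real (Suc k) powr (-s) * \<bar>\<gamma> (Suc k)\<bar>)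
                                 \<le> c * real (Suc k) powr (-(s + \<alpha>))) at_top"
    using eventually_compose_filterlim[OF ev filterlim_Suc]
  proof eventually_elim
    case (elim k)
    have "norm (real (Suc k) powr (-s) * \<bar>\<gamma> (Suc k)\<bar>) \<le> real (Suc k) powr (-s) * (c * real (Suc k) powr (-\<alpha>))"
      using elim by (auto intro: mult_left_mono)
    also have "\<dots> = c * real (Suc k) powr (-(s + \<alpha>))"
      by (simp add: powr_add[symmetric] mult.left_commute)
    finally show ?case .
  qed
  ultimately show ?thesis by (rule summable_comparison_test_ev[rotated])
qed

lemma Dbeta_commute: "Dbeta M P V b s t = Dbeta M P V b t s"
  unfolding Dbeta_def by (simp add: abs_minus_commute)

lemma natural_filtration_subalgebra:
  assumes "\<And>n. X n \<in> \<Omega> \<rightarrow>\<^sub>M M" and "\<And>n. \<theta> n \<in> \<Omega> \<rightarrow>\<^sub>M T"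
  shows "subalgebra \<Omega> (natural_filtration \<Omega> M T X \<theta> n)"
proof -
  let ?G = "\<Union>k\<in>{..n}. {(\<lambda>\<omega>. (X k \<omega>, \<theta> k \<omega>)) -` A \<inter> space \<Omega> | A. A \<in> sets (M \<Otimes>\<^sub>M T)}"
  have "\<And>k. (\<lambda>\<omega>. (X k \<omega>, \<theta> k \<omega>)) \<in> \<Omega> \<rightarrow>\<^sub>M (M \<Otimes>\<^sub>M T)"
    using assms by (intro measurable_Pair) auto
  then have "?G \<subseteq> sets \<Omega>" by (auto intro: measurable_sets)
  moreover have "?G \<subseteq> Pow (space \<Omega>)" by auto
  ultimately show ?thesis
    unfolding subalgebra_def natural_filtration_def
    by (simp add: space_measure_of_conv sets_measure_of_conv sets.sigma_sets_subset)
qed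

lemma nn_integral_markov_step:
  fixes f :: "'x \<Rightarrow> ennreal"
  assumes "prob_space \<Omega>" and "\<And>n. X n \<in> \<Omega> \<rightarrow>\<^sub>M M" and "\<And>n. \<theta> n \<in> \<Omega> \<rightarrow>\<^sub>M T"
    and f: "f \<in> borel_measurable M"
    and markov: "AE \<omega> in \<Omega>. nn_cond_exp \<Omega> (natural_filtration \<Omega> M T X \<theta> n) (\<lambda>\<omega>. f (X (Suc n) \<omega>)) \<omega>
                             = (\<integral>\<^sup>+ y. f y \<partial>P (\<theta> n \<omega>) (X n \<omega>))"
  shows "(\<integral>\<^sup>+ \<omega>. f (X (Suc n) \<omega>) \<partial>\<Omega>) = (\<integral>\<^sup>+ \<omega>. (\<integral>\<^sup>+ y. f y \<partial>P (\<theta> n \<omega>) (X n \<omega>)) \<partial>\<Omega>)"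
proof -
  interpret prob_space \<Omega> by fact
  interpret F: finite_measure_subalgebra \<Omega> "natural_filtration \<Omega> M T X \<theta> n"
    by unfold_locales (rule natural_filtration_subalgebra[OF assms(2,3)])
  have "(\<integral>\<^sup>+ \<omega>. f (X (Suc n) \<omega>) \<partial>\<Omega>)
        = (\<integral>\<^sup>+ \<omega>. 1 * nn_cond_exp \<Omega> (natural_filtration \<Omega> M T X \<theta> n) (\<lambda>\<omega>. f (X (Suc n) \<omega>)) \<omega> \<partial>\<Omega>)"
    using assms(2) f by (subst F.nn_cond_exp_intg) auto
  also have "\<dots> = (\<integral>\<^sup>+ \<omega>. (\<integral>\<^sup>+ y. f y \<partial>P (\<theta> n \<omega>) (X n \<omega>)) \<partial>\<Omega>)"
    using markov by (intro nn_integral_cong_AE) auto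
  finally show ?thesis .
qed

lemma bounded_if_affine_contraction:
  fixes e :: "nat \<Rightarrow> ennreal"
  assumes "e 0 < \<infinity>" and "0 \<le> q" "q < 1" "0 \<le> b"
    and step: "\<And>n. e (Suc n) \<le> ennreal q * e n + ennreal b"
  shows "e n \<le> ennreal (max (enn2real (e 0)) (b / (1 - q)))"
proof (induction n)
  case 0
  from \<open>e 0 < \<infinity>\<close> show ?case by (cases "e 0" rule: ennreal_cases) (auto intro: ennreal_leI)
next
  case (Suc n)
  define B where "B = max (enn2real (e 0)) (b / (1 - q))"
  have "0 \<le> B" "b / (1 - q) \<le> B"
    by (auto simp: B_def max.coboundedI1)
  then have "b \<le> B * (1 - q)"
    using assms by (simp add: pos_divide_le_eq)
  have "e (Suc n) \<le> ennreal q * e n + ennreal b" by (rule step)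
  also have "\<dots> \<le> ennreal q * ennreal B + ennreal b"
    using Suc.IH by (intro add_right_mono mult_left_mono) (auto simp: B_def)
  also have "\<dots> = ennreal (q * B + b)"
    using assms \<open>0 \<le> B\<close> by (simp add: ennreal_mult ennreal_plus)
  also have "\<dots> \<le> ennreal B"
    using \<open>b \<le> B * (1 - q)\<close> by (intro ennreal_leI) (simp add: algebra_simps)
  finally show ?case by (simp add: B_def)
qed

lemma drift_bounded_moments:
  fixes V :: "'x \<Rightarrow> real"
  assumes "prob_space \<Omega>" and X_meas: "\<And>n. X n \<in> \<Omega> \<rightarrow>\<^sub>M M" and \<theta>_meas: "\<And>n. \<theta> n \<in> \<Omega> \<rightarrow>\<^sub>M T"
    and V_meas: "V \<in> borel_measurable M" and V_nonneg: "\<And>x. x \<in> space M \<Longrightarrow> 0 \<le> V x"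
    and markov: "\<And>n. AE \<omega> in \<Omega>. nn_cond_exp \<Omega> (natural_filtration \<Omega> M T X \<theta> n)
                                  (\<lambda>\<omega>. ennreal (V (X (Suc n) \<omega>))) \<omega>
                                = (\<integral>\<^sup>+ y. ennreal (V y) \<partial>P (\<theta> n \<omega>) (X n \<omega>))"
    and drift: "\<And>t x. t \<in> space T \<Longrightarrow> x \<in> space M \<Longrightarrow>
                  (\<integral>\<^sup>+ y. ennreal (V y) \<partial>P t x) \<le> ennreal (q * V x + b)"
    and q: "0 \<le> q" "q < 1"
    and init: "(\<integral>\<^sup>+ \<omega>. ennreal (V (X 0 \<omega>)) \<partial>\<Omega>) < \<infinity>"
  shows "\<exists>B. \<forall>n. (\<integral>\<^sup>+ \<omega>. ennreal (V (X n \<omega>)) \<partial>\<Omega>) \<le> ennreal B"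
proof -
  interpret prob_space \<Omega> by fact
  define e where "e n = (\<integral>\<^sup>+ \<omega>. ennreal (V (X n \<omega>)) \<partial>\<Omega>)" for n
  have step: "e (Suc n) \<le> ennreal q * e n + ennreal (max b 0)" for n
  proof -
    have "e (Suc n) = (\<integral>\<^sup>+ \<omega>. (\<integral>\<^sup>+ y. ennreal (V y) \<partial>P (\<theta> n \<omega>) (X n \<omega>)) \<partial>\<Omega>)"
      unfolding e_def
      by (rule nn_integral_markov_step[OF assms(1) X_meas \<theta>_meas _ markov]) (use V_meas in measurable)
    also have "\<dots> \<le> (\<integral>\<^sup>+ \<omega>. ennreal q * ennreal (V (X n \<omega>)) + ennreal (max b 0) \<partial>\<Omega>)"
    proof (intro nn_integral_mono)
      fix \<omega> assume "\<omega> \<in> space \<Omega>"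
      then have "\<theta> n \<omega> \<in> space T" "X n \<omega> \<in> space M"
        by (auto intro: measurable_space[OF \<theta>_meas] measurable_space[OF X_meas])
      then have "(\<integral>\<^sup>+ y. ennreal (V y) \<partial>P (\<theta> n \<omega>) (X n \<omega>)) \<le> ennreal (q * V (X n \<omega>) + b)"
        by (rule drift)
      also have "\<dots> \<le> ennreal (q * V (X n \<omega>) + max b 0)"
        by (intro ennreal_leI) simp
      also have "\<dots> = ennreal q * ennreal (V (X n \<omega>)) + ennreal (max b 0)"
        using q V_nonneg \<open>X n \<omega> \<in> space M\<close> by (simp add: ennreal_plus ennreal_mult)
      finally show "(\<integral>\<^sup>+ y. ennreal (V y) \<partial>P (\<theta> n \<omega>) (X n \<omega>))
                    \<le> ennreal q * ennreal (V (X n \<omega>)) + ennreal (max b 0)" .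
    qed
    also have "\<dots> = ennreal q * e n + ennreal (max b 0)"
      using X_meas V_meas unfolding e_def
      by (simp add: nn_integral_add nn_integral_cmult emeasure_space_1)
    finally show ?thesis .
  qed
  have "e 0 < \<infinity>" using init by (simp add: e_def)
  with q have "e n \<le> ennreal (max (enn2real (e 0)) (max b 0 / (1 - q)))" for n
    by (intro bounded_if_affine_contraction step) auto
  then show ?thesis unfolding e_def by blast
qed

lemma AE_suminf_finite_if_bounded_nn_integrals:
  fixes W :: "nat \<Rightarrow> 'a \<Rightarrow> ennreal" and a :: "nat \<Rightarrow> real"
  assumes W_meas: "\<And>k. W k \<in> borel_measurable N" and W_bound: "\<And>k. integral\<^sup>N N (W k) \<le> ennreal B"
    and "summable a" and a_nonneg: "\<And>k. 0 \<le> a k"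
  shows "AE \<omega> in N. (\<Sum>k. ennreal (a k) * W k \<omega>) < \<infinity>"
proof -
  have "(\<integral>\<^sup>+ \<omega>. (\<Sum>k. ennreal (a k) * W k \<omega>) \<partial>N) = (\<Sum>k. ennreal (a k) * integral\<^sup>N N (W k))"
    using W_meas by (simp add: nn_integral_suminf nn_integral_cmult)
  also have "\<dots> \<le> (\<Sum>k. ennreal B * ennreal (a k))"
    using W_bound by (intro suminf_le) (auto simp: mult.commute[of "ennreal B"] intro: mult_left_mono)
  also have "\<dots> = ennreal B * ennreal (\<Sum>k. a k)"
    using assms by (simp add: suminf_ennreal2)
  also have "\<dots> < \<infinity>" by (simp add: ennreal_mult_less_top)
  finally have "(\<integral>\<^sup>+ \<omega>. (\<Sum>k. ennreal (a k) * W k \<omega>) \<partial>N) \<noteq> \<infinity>" by simp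
  with W_meas have "AE \<omega> in N. (\<Sum>k. ennreal (a k) * W k \<omega>) \<noteq> \<infinity>"
    by (intro nn_integral_PInf_AE) auto
  then show ?thesis by (rule eventually_mono) (simp add: top.not_eq_extremum)
qed

lemma ennreal_weighted_term_le:
  fixes D :: ennreal and v :: real
  assumes D: "D \<le> ennreal (C * g * v powr \<eta>)" and v: "1 \<le> v" and "\<eta> + \<beta> \<le> 1" and "0 \<le> c"
  shows "ennreal c * D * ennreal (v powr \<beta>) \<le> ennreal (c * \<bar>g\<bar> * \<bar>C\<bar>) * ennreal v"
proof -
  have "D \<le> ennreal (\<bar>C\<bar> * \<bar>g\<bar> * v powr \<eta>)"
    using D by (rule order_trans) (auto intro!: ennreal_leI mult_right_mono simp: abs_mult[symmetric])
  then have "ennreal c * D * ennreal (v powr \<beta>)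
             \<le> ennreal c * ennreal (\<bar>C\<bar> * \<bar>g\<bar> * v powr \<eta>) * ennreal (v powr \<beta>)"
    by (intro mult_right_mono mult_left_mono) auto
  also have "\<dots> = ennreal (c * \<bar>g\<bar> * \<bar>C\<bar> * v powr (\<eta> + \<beta>))"
    using \<open>0 \<le> c\<close> by (simp add: ennreal_mult[symmetric] powr_add mult_ac)
  also have "\<dots> \<le> ennreal (c * \<bar>g\<bar> * \<bar>C\<bar> * v)"
    using assms powr_mono[of "\<eta> + \<beta>" 1 v] by (intro ennreal_leI mult_left_mono) auto
  finally show ?thesis
    using \<open>0 \<le> c\<close> v by (simp add: ennreal_mult)
qed

theorem proposition3p2:
  fixes M :: "'x measure" and T :: "'t measure" and \<pi> :: "'x measure"
    and P :: "'t \<Rightarrow> 'x \<Rightarrow> 'x measure"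
    and \<mu> :: "('x \<times> 't) measure"
    and \<Omega> :: "'w measure" and X :: "nat \<Rightarrow> 'w \<Rightarrow> 'x" and \<theta> :: "nat \<Rightarrow> 'w \<Rightarrow> 't"
    and V :: "'x \<Rightarrow> real" and \<gamma> :: "nat \<Rightarrow> real" and \<eta> :: real and \<beta> :: real
  assumes cg: "countably_generated M"
    and pi_prob: "prob_space \<pi>" and pi_sets: "sets \<pi> = sets M"
    and kern: "\<And>t. t \<in> space T \<Longrightarrow> markov_kernel M (P t)"
    and kern_meas: "\<And>x A. x \<in> space M \<Longrightarrow> A \<in> sets M \<Longrightarrow>
                       (\<lambda>t. emeasure (P t x) A) \<in> borel_measurable T"
    and invariant: "\<And>t. t \<in> space T \<Longrightarrow> \<pi> \<bind> P t = \<pi>"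
    and Omega: "prob_space \<Omega>"
    and X_meas: "\<And>n. X n \<in> \<Omega> \<rightarrow>\<^sub>M M"
    and theta_meas: "\<And>n. \<theta> n \<in> \<Omega> \<rightarrow>\<^sub>M T"
    and init: "distr \<Omega> (M \<Otimes>\<^sub>M T) (\<lambda>\<omega>. (X 0 \<omega>, \<theta> 0 \<omega>)) = \<mu>"
    and markov: "\<And>n f. f \<in> borel_measurable M \<Longrightarrow>
        AE \<omega> in \<Omega>. nn_cond_exp \<Omega> (natural_filtration \<Omega> M T X \<theta> n)
                       (\<lambda>\<omega>. f (X (Suc n) \<omega>)) \<omega>
                   = (\<integral>\<^sup>+ y. f y \<partial>P (\<theta> n \<omega>) (X n \<omega>))"
    \<comment> \<open>Assumption A1\<close>
    and A1_irred: "\<And>t. t \<in> space T \<Longrightarrow> phi_irreducible M (P t)"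
    and A1_aper: "\<And>t. t \<in> space T \<Longrightarrow> aperiodic M (P t)"
    and V_meas: "V \<in> borel_measurable M"
    and V_ge1: "\<And>x. x \<in> space M \<Longrightarrow> V x \<ge> 1"
    and V_init: "(\<integral>\<^sup>+ z. ennreal (V (fst z)) \<partial>\<mu>) < \<infinity>"
    and A1_geom: "\<And>b. b \<in> {0<..1} \<Longrightarrow> \<exists>\<rho> C. 0 < \<rho> \<and> \<rho> < 1 \<and>
        (\<forall>t\<in>space T. \<forall>x\<in>space M. \<forall>n.
           wnorm_diff M (\<lambda>y. V y powr b) (kpow M (P t) n x) \<pi> \<le> ennreal (C * \<rho> ^ n * V x powr b))"
    and A1_drift: "\<exists>(bd::real) lam. 0 < lam \<and> lam < 1 \<and>
        (\<forall>t\<in>space T. \<forall>x\<in>space M.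
           (\<integral>\<^sup>+ y. ennreal (V y) \<partial>P t x) \<le> ennreal (lam * V x + bd))"
    \<comment> \<open>Assumption A2\<close>
    and eta: "0 \<le> \<eta>" "\<eta> < 1/2"
    and gamma_pos: "\<And>n. n \<ge> 1 \<Longrightarrow> \<gamma> n > 0"
    and gamma_mono: "\<And>m n. 1 \<le> m \<Longrightarrow> m \<le> n \<Longrightarrow> \<gamma> n \<le> \<gamma> m"
    and gamma_rate: "\<exists>\<alpha>>1/2. \<gamma> \<in> O(\<lambda>n. real n powr (-\<alpha>))"
    and A2: "\<And>b. b \<in> {0..1} \<Longrightarrow> \<exists>C. AE \<omega> in \<Omega>. \<forall>n\<ge>1.
        Dbeta M P V b (\<theta> (n - 1) \<omega>) (\<theta> n \<omega>) \<le> ennreal (C * \<gamma> n * V (X n \<omega>) powr \<eta>)"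
    and beta: "0 \<le> \<beta>" "\<beta> < 1/2"
  shows "AE \<omega> in \<Omega>.
           (\<Sum>k. ennreal (real (Suc k) powr (-1/2)) * Dbeta M P V \<beta> (\<theta> (Suc k) \<omega>) (\<theta> k \<omega>)
                   * ennreal (V (X (Suc k) \<omega>) powr \<beta>)) < \<infinity>"
proof -
  obtain C where C: "AE \<omega> in \<Omega>. \<forall>n\<ge>1.
      Dbeta M P V \<beta> (\<theta> (n - 1) \<omega>) (\<theta> n \<omega>) \<le> ennreal (C * \<gamma> n * V (X n \<omega>) powr \<eta>)"
    using A2[of \<beta>] beta by auto
  obtain b q where q: "0 < q" "q < 1" and drift: "\<forall>t\<in>space T. \<forall>x\<in>space M.
      (\<integral>\<^sup>+ y. ennreal (V y) \<partial>P t x) \<le> ennreal (q * V x + b)"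
    using A1_drift by blast
  have V_init_X: "(\<integral>\<^sup>+ \<omega>. ennreal (V (X 0 \<omega>)) \<partial>\<Omega>) < \<infinity>"
    using V_init X_meas theta_meas V_meas unfolding init[symmetric] by (simp add: nn_integral_distr)
  have V_nonneg: "0 \<le> V x" if "x \<in> space M" for x
    using V_ge1[OF that] by simp
  obtain B where B: "\<And>n. (\<integral>\<^sup>+ \<omega>. ennreal (V (X n \<omega>)) \<partial>\<Omega>) \<le> ennreal B"
    using drift_bounded_moments[OF Omega X_meas theta_meas V_meas V_nonneg
            markov[OF measurable_compose[OF V_meas measurable_ennreal]]
            drift[rule_format] less_imp_le[OF q(1)] q(2) V_init_X] by blast
  define a where "a k = real (Suc k) powr (-1/2) * \<bar>\<gamma> (Suc k)\<bar> * \<bar>C\<bar>" for k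
  have "summable a"
    using gamma_rate summable_powr_mult_bigo[of \<gamma> _ "1/2"] unfolding a_def
    by (auto intro: summable_mult2)
  have "AE \<omega> in \<Omega>. (\<Sum>k. ennreal (a k) * ennreal (V (X (Suc k) \<omega>))) < \<infinity>"
    using B X_meas V_meas
    by (intro AE_suminf_finite_if_bounded_nn_integrals[OF _ _ \<open>summable a\<close>]) (auto simp: a_def)
  with C AE_space show ?thesis
  proof eventually_elim
    case (elim \<omega>)
    have "ennreal (real (Suc k) powr (-1/2)) * Dbeta M P V \<beta> (\<theta> (Suc k) \<omega>) (\<theta> k \<omega>)
            * ennreal (V (X (Suc k) \<omega>) powr \<beta>)
          \<le> ennreal (a k) * ennreal (V (X (Suc k) \<omega>))" for k
      unfolding a_def
    proof (rule ennreal_weighted_term_le)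
      show "Dbeta M P V \<beta> (\<theta> (Suc k) \<omega>) (\<theta> k \<omega>)
            \<le> ennreal (C * \<gamma> (Suc k) * V (X (Suc k) \<omega>) powr \<eta>)"
        using elim(1) by (subst Dbeta_commute) (auto dest: spec[of _ "Suc k"])
      show "1 \<le> V (X (Suc k) \<omega>)"
        using elim(2) by (auto intro: V_ge1 measurable_space[OF X_meas])
    qed (use eta beta in auto)
    then show ?case
      by (intro le_less_trans[OF suminf_le elim(3)]) auto
  qed
qed

end
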